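(* Let $k$ and $c$ be positive integers, let $G$ be a finite simple graph of order $n$, and let $L \subseteq V(G)$ be fixed. Let $C_{1},\dots,C_{k}$ be pairwise vertex-disjoint $c$-chorded cycles of $G$, each with a fixed orientation, such that $C^{*} := \bigcup_{p=1}^{k} C_{p}$ is not a spanning subgraph of $G$, and such that among all choices of $k$ pairwise vertex-disjoint $c$-chorded cycles in $G$, (A1) $|V(C^{*}) \cap L|$ is as large as possible, and (A2) subject to (A1), $|V(C^{*})|$ is as large as possible. Let $H^{*} = G - V(C^{*})$ and let $H$ be a component of $H^{*}$. Let $C = C_{p}$ for some $1 \le p \le k$, let $v \in N_{C}(H)$ and $x \in V(H)$. Then (i) $v^{+}x \notin E(G)$, and (ii) $d_{H^{*}\cup C}(v^{+}) + d_{H^{*}\cup C}(x) \le |V(H^{*}) \cup V(C)| - 1$.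
   Context: A cycle $C$ in $G$ is a $c$-chorded cycle if $|E(G[V(C)]) \setminus E(C)| \ge c$, where $G[X]$ is the induced subgraph on $X$. For $v \in V(G)$ and $X \subseteq V(G)$, $N_{X}(v) = N_{G}(v) \cap X$ and $d_{X}(v) = |N_{X}(v)|$; for a subgraph $F$ we write $N_{F}$, $d_{F}$ for $N_{V(F)}$, $d_{V(F)}$, and $H^{*}\cup C$ denotes the vertex set $V(H^{*}) \cup V(C)$. For $V' \subseteq V(G)$, $N_{X}(V') = \bigcup_{u \in V'} N_{X}(u)$. For a vertex $v$ on an oriented cycle $C$, $v^{+}$ denotes the successor of $v$ along the orientation of $C$. *)

theory Defs
  imports Main
begin

definition simple_graph :: "'a set \<Rightarrow> ('a \<Rightarrow> 'a \<Rightarrow> bool) \<Rightarrow> bool" where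
  "simple_graph V E \<longleftrightarrow> finite V \<and> (\<forall>u v. E u v \<longrightarrow> u \<in> V \<and> v \<in> V)
     \<and> (\<forall>u v. E u v \<longrightarrow> E v u) \<and> (\<forall>u. \<not> E u u)"

definition cyc_succ :: "'a list \<Rightarrow> nat \<Rightarrow> 'a" where
  "cyc_succ xs i = xs ! ((i + 1) mod length xs)"

definition is_cycle :: "'a set \<Rightarrow> ('a \<Rightarrow> 'a \<Rightarrow> bool) \<Rightarrow> 'a list \<Rightarrow> bool" where
  "is_cycle V E xs \<longleftrightarrow> length xs \<ge> 3 \<and> distinct xs \<and> set xs \<subseteq> V
     \<and> (\<forall>i < length xs. E (xs ! i) (cyc_succ xs i))"

definition cyc_edges :: "'a list \<Rightarrow> 'a set set" where
  "cyc_edges xs = {{xs ! i, cyc_succ xs i} | i. i < length xs}"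

definition ind_edges :: "('a \<Rightarrow> 'a \<Rightarrow> bool) \<Rightarrow> 'a set \<Rightarrow> 'a set set" where
  "ind_edges E S = {{u, v} | u v. u \<in> S \<and> v \<in> S \<and> E u v}"

definition chorded_cycle :: "'a set \<Rightarrow> ('a \<Rightarrow> 'a \<Rightarrow> bool) \<Rightarrow> nat \<Rightarrow> 'a list \<Rightarrow> bool" where
  "chorded_cycle V E c xs \<longleftrightarrow> is_cycle V E xs
     \<and> card (ind_edges E (set xs) - cyc_edges xs) \<ge> c"

definition disjoint_chorded_family ::
  "'a set \<Rightarrow> ('a \<Rightarrow> 'a \<Rightarrow> bool) \<Rightarrow> nat \<Rightarrow> nat \<Rightarrow> (nat \<Rightarrow> 'a list) \<Rightarrow> bool" where
  "disjoint_chorded_family V E c k Cs \<longleftrightarrow>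
     (\<forall>p < k. chorded_cycle V E c (Cs p))
     \<and> (\<forall>p < k. \<forall>q < k. p \<noteq> q \<longrightarrow> set (Cs p) \<inter> set (Cs q) = {})"

definition family_verts :: "nat \<Rightarrow> (nat \<Rightarrow> 'a list) \<Rightarrow> 'a set" where
  "family_verts k Cs = (\<Union>p < k. set (Cs p))"

definition component_of :: "('a \<Rightarrow> 'a \<Rightarrow> bool) \<Rightarrow> 'a set \<Rightarrow> 'a set \<Rightarrow> bool" where
  "component_of E S H \<longleftrightarrow> (\<exists>x \<in> S. H = {y \<in> S.
      (\<lambda>a b. E a b \<and> a \<in> S \<and> b \<in> S)\<^sup>*\<^sup>* x y})"

definition nbhd :: "('a \<Rightarrow> 'a \<Rightarrow> bool) \<Rightarrow> 'a set \<Rightarrow> 'a \<Rightarrow> 'a set" where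
  "nbhd E X v = {u \<in> X. E v u}"

definition deg_in :: "('a \<Rightarrow> 'a \<Rightarrow> bool) \<Rightarrow> 'a set \<Rightarrow> 'a \<Rightarrow> nat" where
  "deg_in E X v = card (nbhd E X v)"

definition nbhd_set :: "('a \<Rightarrow> 'a \<Rightarrow> bool) \<Rightarrow> 'a set \<Rightarrow> 'a set \<Rightarrow> 'a set" where
  "nbhd_set E X V' = (\<Union>u \<in> V'. nbhd E X u)"

end

theory Submission
  imports Defs "Graph_Theory.Vertex_Walk" "HOL-Library.Transitive_Closure_Table"
begin

(* Let w = v+ and let y be a neighbour of v in H. Replacing the arc v w of C by a path
   of H from y to x, reversing a segment of C where necessary, yields a cycle in which v w
   is a chord while at most one chord of C has become a cycle edge. This cycle is again
   c-chorded and covers V(C) together with vertices of H*, contradicting (A1) and (A2).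
   Splicing in place of v w alone refutes w x in E(G), which is (i). Splicing along the
   cycle v P x u ... w u+ ... v, for a neighbour u of x on C, refutes w u+ in E(G); hence
   u |-> u+ maps N_C(x) injectively into V(C) - N_C(w), and d_C(w) + d_C(x) <= |V(C)|.
   As H is a component of H* and w has no neighbour in H, also
   d_H*(w) + d_H*(x) <= |H*| - 1, and the two bounds add up to (ii). *)

section \<open>Oriented cycles as lists\<close>

(* Unlike cyc_edges, the arcs (a, a+) keep the orientation of the cycle. *)
definition cyc_arcs :: "'a list \<Rightarrow> ('a \<times> 'a) set" where
  "cyc_arcs xs = set (vwalk_arcs (xs @ [hd xs]))"

lemma vwalk_arcs_eq_zip: "vwalk_arcs xs = zip xs (tl xs)"
  by (induction xs rule: vwalk_arcs.induct) auto

lemma cyc_arcs_conv_nth: "cyc_arcs xs = {(xs ! i, cyc_succ xs i) | i. i < length xs}"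
proof (cases xs)
  case (Cons a t)
  have "vwalk_arcs (xs @ [hd xs]) = zip xs (rotate1 xs)"
    using Cons zip_append1[of "a # t" "[a]" "t @ [a]"] by (simp add: vwalk_arcs_eq_zip)
  then show ?thesis
    by (auto simp: cyc_arcs_def set_zip nth_rotate1 cyc_succ_def)
qed (simp add: cyc_arcs_def)

lemma cyc_edges_conv_arcs: "cyc_edges xs = (\<lambda>(a, b). {a, b}) ` cyc_arcs xs"
  by (auto simp: cyc_edges_def cyc_arcs_conv_nth)

lemma cyc_arcs_Cons: "cyc_arcs (v # xs) = set (vwalk_arcs (v # xs @ [v]))"
  by (simp add: cyc_arcs_def)

lemma cyc_arcs_append_commute: "cyc_arcs (xs @ ys) = cyc_arcs (ys @ xs)"
proof (cases "xs = [] \<or> ys = []")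
  case False
  have "cyc_arcs (xs @ ys) = set (vwalk_arcs xs) \<union> set (vwalk_arcs ys)
      \<union> {(last xs, hd ys), (last ys, hd xs)}" if "xs \<noteq> []" "ys \<noteq> []" for xs ys :: "'a list"
    using that by (auto simp: cyc_arcs_def vwalk_arcs_append simp flip: append_assoc)
  then show ?thesis using False by auto
qed auto

lemma cyc_arcs_unique:
  assumes "distinct xs" "(a, b) \<in> cyc_arcs xs" "(a, b') \<in> cyc_arcs xs"
  shows "b = b'"
  using assms by (auto simp: cyc_arcs_conv_nth nth_eq_iff_index_eq)

lemma cyc_arcs_succ: "(u, hd (ys @ xs @ [u])) \<in> cyc_arcs (xs @ u # ys)"
  using cyc_arcs_append_commute[of xs "u # ys"] by (simp add: cyc_arcs_Cons)

lemma cyc_arcs_rotate_to_arc: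
  assumes "distinct xs" "2 \<le> length xs" "(v, w) \<in> cyc_arcs xs"
  obtains ys zs R where "xs = ys @ zs" "zs @ ys = v # w # R"
proof -
  have "v \<in> set xs" using assms(3) by (auto simp: cyc_arcs_conv_nth)
  then obtain ys zs where xs: "xs = ys @ v # zs" by (meson split_list)
  then have "w = hd (zs @ ys @ [v])" using assms(1,3) cyc_arcs_unique cyc_arcs_succ by metis
  moreover have "zs @ ys \<noteq> []" using xs assms(2) by auto
  ultimately have "v # zs @ ys = v # w # tl (zs @ ys)" by (metis append_assoc hd_append2 list.collapse)
  then show ?thesis using that xs by (metis append_Cons)
qed

lemma nth_cyc_succ_in_cyc_arcs: "i < length xs \<Longrightarrow> (xs ! i, cyc_succ xs i) \<in> cyc_arcs xs"
  by (auto simp: cyc_arcs_conv_nth)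

lemma card_cyc_succ_image:
  assumes "distinct xs"
  shows "card {cyc_succ xs j | j. j < length xs \<and> Q (xs ! j)} = card {a \<in> set xs. Q a}"
proof -
  let ?J = "{j. j < length xs \<and> Q (xs ! j)}"
  have "{cyc_succ xs j | j. j < length xs \<and> Q (xs ! j)} = nth (rotate1 xs) ` ?J"
    by (auto simp: cyc_succ_def nth_rotate1)
  moreover have "{a \<in> set xs. Q a} = nth xs ` ?J" by (auto simp: in_set_conv_nth)
  moreover have "inj_on (nth (rotate1 xs)) ?J" "inj_on (nth xs) ?J"
    using assms by (simp_all add: inj_on_nth)
  ultimately show ?thesis by (simp add: card_image)
qed

section \<open>Splicing a path into a chorded cycle\<close>

definition chords :: "('a \<Rightarrow> 'a \<Rightarrow> bool) \<Rightarrow> 'a list \<Rightarrow> 'a set set" where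
  "chords E xs = ind_edges E (set xs) - cyc_edges xs"

lemma is_cycle_iff_arcs:
  "is_cycle V E xs \<longleftrightarrow> 3 \<le> length xs \<and> distinct xs \<and> set xs \<subseteq> V \<and> (\<forall>(a, b) \<in> cyc_arcs xs. E a b)"
  by (auto simp: is_cycle_def cyc_arcs_conv_nth)

lemma chorded_cycle_iff: "chorded_cycle V E c xs \<longleftrightarrow> is_cycle V E xs \<and> c \<le> card (chords E xs)"
  by (simp add: chorded_cycle_def chords_def)

lemma chorded_cycle_append_commute:
  "chorded_cycle V E c (xs @ ys) \<longleftrightarrow> chorded_cycle V E c (ys @ xs)"
  unfolding chorded_cycle_iff is_cycle_iff_arcs chords_def cyc_edges_conv_arcs
  by (auto simp: cyc_arcs_append_commute[of xs] Un_commute)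

lemma finite_ind_edges: "finite S \<Longrightarrow> finite (ind_edges E S)"
  by (rule finite_subset[of _ "Pow S"]) (auto simp: ind_edges_def)

lemma card_chords_le:
  assumes sub: "set xs \<subseteq> set ys"
    and f: "f \<in> cyc_edges xs" "f \<in> ind_edges E (set xs)" "f \<notin> cyc_edges ys"
    and new: "cyc_edges ys \<inter> Pow (set xs) \<subseteq> insert e (cyc_edges xs)"
  shows "card (chords E xs) \<le> card (chords E ys)"
proof -
  have "ind_edges E (set xs) \<subseteq> ind_edges E (set ys)" using sub by (auto simp: ind_edges_def)
  moreover have "ind_edges E (set xs) \<subseteq> Pow (set xs)" by (auto simp: ind_edges_def)
  ultimately have "insert f (chords E xs - {e}) \<subseteq> chords E ys"
    using f new by (auto simp: chords_def)
  moreover have fin: "finite (chords E zs)" for zs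
    by (simp add: chords_def finite_ind_edges)
  ultimately have "card (insert f (chords E xs - {e})) \<le> card (chords E ys)"
    by (intro card_mono)
  moreover have "f \<notin> chords E xs" using f by (simp add: chords_def)
  moreover have "card (chords E xs) \<le> Suc (card (chords E xs - {e}))"
    using fin by (cases "e \<in> chords E xs") (simp_all add: card_Diff_singleton)
  ultimately show ?thesis using fin by simp
qed

lemma chorded_cycle_splice:
  assumes sym: "\<And>a b. E a b \<Longrightarrow> E b a"
    and cyc: "chorded_cycle V E c (v # S @ T)" and S: "S \<noteq> []" and T: "T \<noteq> []"
    and P: "P \<noteq> []" "distinct P" "set P \<subseteq> V" "set P \<inter> set (v # S @ T) = {}"
      "\<forall>(a, b) \<in> set (vwalk_arcs P). E a b"
    and new: "E v (hd P)" "E (last P) (last S)" "E (hd S) (hd T)"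
  shows "chorded_cycle V E c (v # P @ rev S @ T)"
proof -
  let ?xs = "v # S @ T" and ?ys = "v # P @ rev S @ T"
  have arcs_xs: "cyc_arcs ?xs = insert (v, hd S) (set (vwalk_arcs S)
      \<union> insert (last S, hd T) (set (vwalk_arcs (T @ [v]))))"
    using S T by (simp add: cyc_arcs_Cons vwalk_arcs_append)
  have arcs_ys: "cyc_arcs ?ys = insert (v, hd P) (set (vwalk_arcs P)
      \<union> insert (last P, last S) (prod.swap ` set (vwalk_arcs S)
      \<union> insert (hd S, hd T) (set (vwalk_arcs (T @ [v])))))"
    using S T P(1) by (auto simp: cyc_arcs_Cons vwalk_arcs_append set_vwalk_arcs_rev hd_rev last_rev)
  have xs: "is_cycle V E ?xs" "c \<le> card (chords E ?xs)"
    using cyc by (simp_all add: chorded_cycle_iff)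
  then have dist: "distinct ?xs" and old: "\<And>a b. (a, b) \<in> cyc_arcs ?xs \<Longrightarrow> E a b"
    by (auto simp: is_cycle_iff_arcs)
  have ends: "hd S \<in> set S" "last S \<in> set S" "hd T \<in> set T" "hd P \<in> set P" "last P \<in> set P"
    using S T P(1) by simp_all
  have "is_cycle V E ?ys"
    unfolding is_cycle_iff_arcs
  proof (intro conjI)
    show "3 \<le> length ?ys" using S T P(1) by (cases S; cases T; cases P) auto
    show "distinct ?ys" using dist P(2,4) by auto
    show "set ?ys \<subseteq> V" using xs(1) P(3) by (auto simp: is_cycle_def)
    have "E a b" if "(a, b) \<in> set (vwalk_arcs S) \<union> set (vwalk_arcs (T @ [v]))" for a b
      using old that unfolding arcs_xs by blast
    then show "\<forall>(a, b) \<in> cyc_arcs ?ys. E a b" using new P(5) sym unfolding arcs_ys by auto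
  qed
  (* The cycle edge {v, hd S} becomes a chord; only the chord {hd S, hd T} may be lost. *)
  moreover have "card (chords E ?xs) \<le> card (chords E ?ys)"
  proof (rule card_chords_le[where f = "{v, hd S}" and e = "{hd S, hd T}"])
    show "set ?xs \<subseteq> set ?ys" by auto
    show "{v, hd S} \<in> cyc_edges ?xs" unfolding cyc_edges_conv_arcs arcs_xs by blast
    show "{v, hd S} \<in> ind_edges E (set ?xs)"
      using old ends unfolding arcs_xs ind_edges_def by auto
    show "{v, hd S} \<notin> cyc_edges ?ys"
      using dist P(4) ends unfolding cyc_edges_conv_arcs arcs_ys
      by (auto simp: doubleton_eq_iff dest!: arcs_in_vwalk_arcs)
    have "{a, b} \<in> insert {hd S, hd T} (cyc_edges ?xs)"
      if "(a, b) \<in> cyc_arcs ?ys" "a \<in> set ?xs" "b \<in> set ?xs" for a b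
    proof -
      have "a \<notin> set P" "b \<notin> set P" using that(2,3) P(4) by auto
      then have "(a, b) \<in> cyc_arcs ?xs \<or> (b, a) \<in> cyc_arcs ?xs \<or> (a, b) = (hd S, hd T)"
        using that(1) ends unfolding arcs_ys arcs_xs by (auto dest: arcs_in_vwalk_arcs)
      then show ?thesis unfolding cyc_edges_conv_arcs by (auto simp: insert_commute)
    qed
    then show "cyc_edges ?ys \<inter> Pow (set ?xs) \<subseteq> insert {hd S, hd T} (cyc_edges ?xs)"
      unfolding cyc_edges_conv_arcs[of ?ys] by auto
  qed
  ultimately show ?thesis using xs(2) by (simp add: chorded_cycle_iff)
qed

section \<open>Components\<close>

lemma rtrancl_path_vwalk:
  assumes "rtrancl_path r x xs y"
  shows "last (x # xs) = y" and "\<forall>(s, t) \<in> set (vwalk_arcs (x # xs)). r s t"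
    and "set (x # xs) \<subseteq> {z. r\<^sup>*\<^sup>* x z}"
  using assms
  by (induction rule: rtrancl_path.induct) (auto intro: converse_rtranclp_into_rtranclp)

lemma component_subset: "component_of E S H \<Longrightarrow> H \<subseteq> S"
  unfolding component_of_def by auto

lemma component_closed:
  assumes "component_of E S H" "z \<in> H" "w \<in> S" "E z w"
  shows "w \<in> H"
  using assms unfolding component_of_def by (auto intro: rtranclp.rtrancl_into_rtrancl)

lemma component_path:
  assumes sym: "\<And>s t. E s t \<Longrightarrow> E t s" and H: "component_of E S H" and ab: "a \<in> H" "b \<in> H"
  obtains P where "P \<noteq> []" "hd P = a" "last P = b" "distinct P" "set P \<subseteq> H"
    "\<forall>(s, t) \<in> set (vwalk_arcs P). E s t"
proof -
  define R where "R s t \<longleftrightarrow> E s t \<and> s \<in> S \<and> t \<in> S" for s t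
  obtain x0 where H_eq: "H = {y \<in> S. R\<^sup>*\<^sup>* x0 y}"
    using H unfolding component_of_def R_def by blast
  have "symp R" using sym by (auto simp: R_def symp_def)
  then have "R\<^sup>*\<^sup>* a x0" using ab H_eq by (auto intro: sympD[OF symp_rtranclp])
  then have "R\<^sup>*\<^sup>* a b" using ab H_eq by auto
  then obtain xs where "rtrancl_path R a xs b" by (auto simp: rtranclp_eq_rtrancl_path)
  then obtain xs' where path: "rtrancl_path R a xs' b" and dist: "distinct (a # xs')"
    by (rule rtrancl_path_distinct)
  have "z \<in> S" if "R\<^sup>*\<^sup>* a z" for z
    using that ab(1) H_eq by (induction rule: rtranclp_induct) (auto simp: R_def)
  then have "z \<in> H" if "R\<^sup>*\<^sup>* a z" for z
    using that ab(1) H_eq by (auto intro: rtranclp_trans)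
  then show thesis
    using that[of "a # xs'"] rtrancl_path_vwalk[OF path] dist by (auto simp: R_def)
qed

lemma deg_in_Un_le: "deg_in E (S \<union> T) a \<le> deg_in E S a + deg_in E T a"
proof -
  have "nbhd E (S \<union> T) a = nbhd E S a \<union> nbhd E T a" by (auto simp: nbhd_def)
  then show ?thesis unfolding deg_in_def by (simp add: card_Un_le)
qed

lemma deg_in_component_le:
  assumes S: "finite S" and H: "component_of E S H" and x: "x \<in> H" "\<not> E x x"
    and w: "nbhd E S w \<inter> H = {}"
  shows "deg_in E S w + deg_in E S x \<le> card S - 1"
proof -
  have HS: "H \<subseteq> S" using component_subset[OF H] .
  have "nbhd E S x \<subseteq> H - {x}"
    using component_closed[OF H x(1)] x(2) by (auto simp: nbhd_def)
  moreover have "nbhd E S w \<subseteq> S - H" using w by (auto simp: nbhd_def)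
  ultimately have "deg_in E S w + deg_in E S x \<le> card (S - H) + card (H - {x})"
    unfolding deg_in_def using S HS by (intro add_mono card_mono) (auto intro: finite_subset)
  also have "\<dots> = card ((S - H) \<union> (H - {x}))"
    using S HS by (intro card_Un_disjoint[symmetric]) (auto intro: finite_subset)
  also have "(S - H) \<union> (H - {x}) = S - {x}" using HS x(1) by auto
  finally show ?thesis using S x(1) HS by auto
qed

section \<open>Maximal families of chorded cycles\<close>

locale maximal_chorded_family =
  fixes V :: "'a set" and E :: "'a \<Rightarrow> 'a \<Rightarrow> bool" and L :: "'a set"
    and k c :: nat and Cs :: "nat \<Rightarrow> 'a list"
  assumes graph: "simple_graph V E"
    and family: "disjoint_chorded_family V E c k Cs"
    and max_L: "\<forall>Ds. disjoint_chorded_family V E c k Ds \<longrightarrow>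
               card (family_verts k Ds \<inter> L) \<le> card (family_verts k Cs \<inter> L)"
    and max_card: "\<forall>Ds. disjoint_chorded_family V E c k Ds
               \<and> card (family_verts k Ds \<inter> L) = card (family_verts k Cs \<inter> L) \<longrightarrow>
               card (family_verts k Ds) \<le> card (family_verts k Cs)"
begin

abbreviation Hstar :: "'a set" where
  "Hstar \<equiv> V - family_verts k Cs"

lemma finite_V: "finite V"
  and E_sym: "E a b \<Longrightarrow> E b a"
  and E_irrefl: "\<not> E a a"
  using graph by (auto simp: simple_graph_def)

lemma member_chorded_cycle: "p < k \<Longrightarrow> chorded_cycle V E c (Cs p)"
  using family by (simp add: disjoint_chorded_family_def)

lemma member_distinct: "p < k \<Longrightarrow> distinct (Cs p)"
  and member_length: "p < k \<Longrightarrow> 3 \<le> length (Cs p)"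
  using member_chorded_cycle by (auto simp: chorded_cycle_def is_cycle_def)

lemma member_disjoint_Hstar: "p < k \<Longrightarrow> set (Cs p) \<inter> Hstar = {}"
  by (auto simp: family_verts_def)

lemma enlarged_cycle_not_chorded:
  assumes p: "p < k" and grow: "set (Cs p) \<subset> set zs" "set zs \<subseteq> set (Cs p) \<union> Hstar"
  shows "\<not> chorded_cycle V E c zs"
proof
  assume zs: "chorded_cycle V E c zs"
  let ?Ds = "Cs(p := zs)"
  have "set (Cs q) \<inter> set zs = {}" if "q < k" "q \<noteq> p" for q
    using family grow(2) that p unfolding disjoint_chorded_family_def family_verts_def by blast
  then have Ds: "disjoint_chorded_family V E c k ?Ds"
    using family zs unfolding disjoint_chorded_family_def by (simp add: Int_commute)
  have verts: "family_verts k ?Ds = family_verts k Cs \<union> set zs"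
    using p grow(1) unfolding family_verts_def by (force split: if_splits)
  have fin: "finite (family_verts k Cs \<union> set zs)"
    using finite_V grow(2) by (auto simp: family_verts_def intro: finite_subset)
  have "card (family_verts k ?Ds \<inter> L) = card (family_verts k Cs \<inter> L)"
  proof (rule antisym)
    show "card (family_verts k Cs \<inter> L) \<le> card (family_verts k ?Ds \<inter> L)"
      using fin verts by (intro card_mono) auto
  qed (use max_L Ds in blast)
  then have "card (family_verts k Cs \<union> set zs) \<le> card (family_verts k Cs)"
    using max_card Ds verts by metis
  moreover have "family_verts k Cs \<subset> family_verts k Cs \<union> set zs"
    using grow member_disjoint_Hstar[OF p] by blast
  ultimately show False using fin psubset_card_mono by (metis leD)
qed

lemma member_arc_edge: "p < k \<Longrightarrow> (a, b) \<in> cyc_arcs (Cs p) \<Longrightarrow> E a b"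
  using member_chorded_cycle by (auto simp: chorded_cycle_def is_cycle_iff_arcs)

lemma member_rotate_to_arc:
  assumes "p < k" "(v, w) \<in> cyc_arcs (Cs p)"
  obtains A B R where "Cs p = A @ B" "B @ A = v # w # R" "R \<noteq> []"
proof -
  have "2 \<le> length (Cs p)" using member_length[OF assms(1)] by simp
  then obtain A B R where rot: "Cs p = A @ B" "B @ A = v # w # R"
    using member_distinct[OF assms(1)] assms(2) cyc_arcs_rotate_to_arc by metis
  moreover have "length (B @ A) = length (Cs p)" using rot(1) by simp
  then have "R \<noteq> []" using rot(2) member_length[OF assms(1)] by auto
  ultimately show thesis using that by blast
qed

lemma no_splice_through_component:
  assumes H: "component_of E Hstar H" and p: "p < k"
    and rot: "Cs p = A @ B" "B @ A = v # S @ T" and S: "S \<noteq> []" and T: "T \<noteq> []"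
    and y: "y \<in> H" "E v y" and x: "x \<in> H" "E x (last S)" and new: "E (hd S) (hd T)"
  shows False
proof -
  obtain P where P: "P \<noteq> []" "hd P = y" "last P = x" "distinct P" "set P \<subseteq> H"
    "\<forall>(s, t) \<in> set (vwalk_arcs P). E s t"
    using component_path[OF E_sym H y(1) x(1)] by blast
  have set_rot: "set (v # S @ T) = set (Cs p)" using rot by (metis set_append Un_commute)
  have "set P \<subseteq> Hstar" using P(5) component_subset[OF H] by blast
  then have disj: "set P \<inter> set (v # S @ T) = {}" and "set P \<subseteq> V"
    using member_disjoint_Hstar[OF p] set_rot by auto
  have cyc: "chorded_cycle V E c (v # S @ T)"
    using member_chorded_cycle[OF p] rot chorded_cycle_append_commute by metis
  have "chorded_cycle V E c (v # P @ rev S @ T)"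
    using chorded_cycle_splice[OF E_sym cyc S T P(1,4) \<open>set P \<subseteq> V\<close> disj P(6)]
      P(2,3) y(2) x(2) new by simp
  moreover have "set (v # P @ rev S @ T) = set (Cs p) \<union> set P" using set_rot by auto
  then have "set (Cs p) \<subset> set (v # P @ rev S @ T)" "set (v # P @ rev S @ T) \<subseteq> set (Cs p) \<union> Hstar"
    using disj set_rot hd_in_set[OF P(1)] \<open>set P \<subseteq> Hstar\<close> by auto
  ultimately show False using enlarged_cycle_not_chorded[OF p] by blast
qed

lemma successor_not_adjacent:
  assumes H: "component_of E Hstar H" and p: "p < k" and arc: "(v, w) \<in> cyc_arcs (Cs p)"
    and y: "y \<in> H" "E y v" and x: "x \<in> H"
  shows "\<not> E w x"
proof
  assume "E w x"
  obtain A B R where rot: "Cs p = A @ B" "B @ A = v # w # R" and "R \<noteq> []"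
    using member_rotate_to_arc[OF p arc] .
  have "(w, hd (R @ [v] @ [w])) \<in> cyc_arcs (Cs p)"
    using cyc_arcs_succ[of w R "[v]"] cyc_arcs_append_commute[of A B] rot by simp
  then have "E w (hd R)" using member_arc_edge[OF p] \<open>R \<noteq> []\<close> by simp
  then show False
    using no_splice_through_component[OF H p rot(1), of v "[w]" R] rot(2) \<open>R \<noteq> []\<close>
      y E_sym x \<open>E w x\<close> by auto
qed

lemma successors_not_adjacent:
  assumes H: "component_of E Hstar H" and p: "p < k"
    and arcs: "(v, w) \<in> cyc_arcs (Cs p)" "(u, u') \<in> cyc_arcs (Cs p)"
    and y: "y \<in> H" "E y v" and x: "x \<in> H" "E x u" and ne: "u \<noteq> v" "u \<noteq> w" "u' \<noteq> v"
  shows "\<not> E w u'"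
proof
  assume "E w u'"
  obtain A B R where rot: "Cs p = A @ B" "B @ A = v # w # R"
    using member_rotate_to_arc[OF p arcs(1)] .
  have "u \<in> set (Cs p)" using arcs(2) by (auto simp: cyc_arcs_conv_nth)
  moreover have "set (Cs p) = set (v # w # R)" using rot by (metis set_append Un_commute)
  ultimately have "u \<in> set R" using ne by auto
  then obtain R1 R2 where R: "R = R1 @ u # R2" by (meson split_list)
  have "(u, hd (R2 @ (v # w # R1) @ [u])) \<in> cyc_arcs (Cs p)"
    using cyc_arcs_succ[of u R2 "v # w # R1"] cyc_arcs_append_commute[of A B] rot R by simp
  then have "u' = hd (R2 @ (v # w # R1) @ [u])"
    using arcs(2) member_distinct[OF p] cyc_arcs_unique by metis
  then have "R2 \<noteq> []" "u' = hd R2" using ne(3) by (cases R2; simp)+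
  (* the cycle v P x u R1\<^sup>r w u' \<dots> v *)
  then show False
    using no_splice_through_component[OF H p rot(1), of v "w # R1 @ [u]" R2] rot(2) R
      y E_sym x \<open>E w u'\<close> by auto
qed

lemma deg_in_member_le:
  assumes H: "component_of E Hstar H" and p: "p < k" and i: "i < length (Cs p)"
    and y: "y \<in> H" "E y (Cs p ! i)" and x: "x \<in> H"
  shows "deg_in E (set (Cs p)) (cyc_succ (Cs p) i) + deg_in E (set (Cs p)) x \<le> card (set (Cs p))"
proof -
  let ?v = "Cs p ! i" and ?w = "cyc_succ (Cs p) i"
  let ?Y = "{cyc_succ (Cs p) j | j. j < length (Cs p) \<and> E x (Cs p ! j)}"
  have dist: "distinct (Cs p)" using member_distinct[OF p] .
  have arc: "(?v, ?w) \<in> cyc_arcs (Cs p)" using nth_cyc_succ_in_cyc_arcs[OF i] .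
  have "\<not> E ?w (cyc_succ (Cs p) j)" if j: "j < length (Cs p)" "E x (Cs p ! j)" for j
  proof -
    let ?u = "Cs p ! j" and ?u' = "cyc_succ (Cs p) j"
    have arc': "(?u, ?u') \<in> cyc_arcs (Cs p)" using nth_cyc_succ_in_cyc_arcs[OF j(1)] .
    consider "?u = ?v" | "?u = ?w" | "?u' = ?v" | "?u \<noteq> ?v" "?u \<noteq> ?w" "?u' \<noteq> ?v" by blast
    then show ?thesis
    proof cases
      case 1
      then have "j = i" using dist i j(1) nth_eq_iff_index_eq by metis
      then show ?thesis using E_irrefl by simp
    next
      case 2
      then show ?thesis using successor_not_adjacent[OF H p arc y x] j(2) E_sym by auto
    next
      case 3
      then show ?thesis using successor_not_adjacent[OF H p arc' x j(2) y(1)] y(2) E_sym by auto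
    next
      case 4
      then show ?thesis using successors_not_adjacent[OF H p arc arc' y x j(2)] by blast
    qed
  qed
  then have "?Y \<inter> nbhd E (set (Cs p)) ?w = {}" by (auto simp: nbhd_def)
  then have "card ?Y + deg_in E (set (Cs p)) ?w = card (?Y \<union> nbhd E (set (Cs p)) ?w)"
    unfolding deg_in_def by (intro card_Un_disjoint[symmetric]) (auto simp: nbhd_def)
  also have "\<dots> \<le> card (set (Cs p))"
    by (intro card_mono) (auto intro!: nth_mem mod_less_divisor simp: cyc_succ_def nbhd_def)
  finally show ?thesis
    using card_cyc_succ_image[OF dist, of "E x"] by (simp add: deg_in_def nbhd_def)
qed

lemma deg_in_sum_le:
  assumes H: "component_of E Hstar H" and p: "p < k" and i: "i < length (Cs p)"
    and y: "y \<in> H" "E y (Cs p ! i)" and x: "x \<in> H"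
  shows "deg_in E (Hstar \<union> set (Cs p)) (cyc_succ (Cs p) i) + deg_in E (Hstar \<union> set (Cs p)) x
    \<le> card (Hstar \<union> set (Cs p)) - 1"
proof -
  let ?w = "cyc_succ (Cs p) i"
  have "nbhd E Hstar ?w \<inter> H = {}"
    using successor_not_adjacent[OF H p nth_cyc_succ_in_cyc_arcs[OF i] y] by (auto simp: nbhd_def)
  then have outside: "deg_in E Hstar ?w + deg_in E Hstar x \<le> card Hstar - 1"
    using deg_in_component_le[OF _ H x E_irrefl] finite_V by simp
  have "x \<in> Hstar" using x component_subset[OF H] by blast
  then have "card Hstar > 0" using finite_V by (metis card_gt_0_iff empty_iff finite_Diff)
  moreover have "card (Hstar \<union> set (Cs p)) = card Hstar + card (set (Cs p))"
    using finite_V member_disjoint_Hstar[OF p] by (intro card_Un_disjoint) auto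
  ultimately show ?thesis
    using outside deg_in_member_le[OF H p i y x]
      deg_in_Un_le[of E Hstar "set (Cs p)" ?w] deg_in_Un_le[of E Hstar "set (Cs p)" x]
    by linarith
qed

end

theorem lemma1:
  fixes V :: "'a set" and E :: "'a \<Rightarrow> 'a \<Rightarrow> bool" and L :: "'a set"
    and k c :: nat and Cs :: "nat \<Rightarrow> 'a list"
    and H :: "'a set" and p i :: nat and x :: 'a
  assumes G: "simple_graph V E"
    and kpos: "k > 0" and cpos: "c > 0"
    and L: "L \<subseteq> V"
    and fam: "disjoint_chorded_family V E c k Cs"
    and nonspan: "family_verts k Cs \<noteq> V"
    and A1: "\<forall>Ds. disjoint_chorded_family V E c k Ds \<longrightarrow>
               card (family_verts k Ds \<inter> L) \<le> card (family_verts k Cs \<inter> L)"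
    and A2: "\<forall>Ds. disjoint_chorded_family V E c k Ds
               \<and> card (family_verts k Ds \<inter> L) = card (family_verts k Cs \<inter> L) \<longrightarrow>
               card (family_verts k Ds) \<le> card (family_verts k Cs)"
    and H: "component_of E (V - family_verts k Cs) H"
    and p: "p < k"
    and i: "i < length (Cs p)"
    and v: "Cs p ! i \<in> nbhd_set E (set (Cs p)) H"
    and x: "x \<in> H"
  shows "\<not> E (cyc_succ (Cs p) i) x
    \<and> deg_in E ((V - family_verts k Cs) \<union> set (Cs p)) (cyc_succ (Cs p) i)
      + deg_in E ((V - family_verts k Cs) \<union> set (Cs p)) x
      \<le> card ((V - family_verts k Cs) \<union> set (Cs p)) - 1"
proof -
  interpret maximal_chorded_family V E L k c Cs
    using G fam A1 A2 by unfold_locales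
  obtain y where y: "y \<in> H" "E y (Cs p ! i)"
    using v by (auto simp: nbhd_set_def nbhd_def)
  show ?thesis
    using successor_not_adjacent[OF H p nth_cyc_succ_in_cyc_arcs[OF i] y x]
      deg_in_sum_le[OF H p i y x] by blast
qed

end
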